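(* Let $\mathcal{L}$ be a language with semantic structure $\mathcal{S}=(\Sigma,I)$. (1) $P_{\mathcal{L}}=\mathrm{par}(\mathrm{AD}_{\mathcal{L}})$ and $\mathrm{pad}(P_{\mathcal{L}})=\mathrm{pad}(\mathrm{par}(\mathrm{AD}_{\mathcal{L}}))$. (2) For $P\in\mathrm{Part}(\Sigma)$: $P$ is strongly preserving for $\mathcal{L}$ iff $P\preceq\mathrm{par}(\mathrm{AD}_{\mathcal{L}})$ iff $\mathrm{pad}(P)\sqsubseteq\mathrm{AD}_{\mathcal{L}}$. (3) If $\mathcal{L}$ is closed under infinite logical conjunction, then $\mathrm{AD}_{\mathcal{L}}$ is partitioning if and only if $\mathcal{L}$ is closed under logical negation.
   Context: A language $\mathcal{L}$ has formulae $\varphi::=p\mid f(\varphi_1,\dots,\varphi_n)$, $p$ in a set of atoms, $f$ in a finite set of operators of arity $\ge1$; a semantic structure $\mathcal{S}=(\Sigma,I)$ interprets atoms as subsets of $\Sigma$ and operators as maps $\wp(\Sigma)^n\to\wp(\Sigma)$, giving compositionally the concrete semantics $[\![\varphi]\!]_{\mathcal{S}}\subseteq\Sigma$. Abstract domains of $\wp(\Sigma)_\subseteq$ are given by Galois insertions $(\alpha,\wp(\Sigma),A,\gamma)$ with closure $\mu_A=\gamma\circ\alpha$, identified when closures coincide, and ordered by $A_1\sqsubseteq A_2$ iff $\mu_{A_1}\le\mu_{A_2}$ pointwise. $\mathrm{AD}_{\mathcal{L}}$ is the abstract domain whose closure has as image all intersections of subfamilies of $\{[\![\varphi]\!]_{\mathcal{S}}\mid\varphi\in\mathcal{L}\}$.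 $\mathrm{Part}(\Sigma)$ is ordered by $P_1\preceq P_2$ iff each block of $P_1$ lies in a block of $P_2$. $\mathrm{pad}(P)$ is the abstract domain with closure $S\mapsto\bigcup\{B\in P\mid B\cap S\ne\varnothing\}$; $A$ is partitioning if it equals $\mathrm{pad}(P)$ for some $P$. $\mathrm{par}(A)$ is the partition into classes of $s\equiv s'\iff\alpha(\{s\})=\alpha(\{s'\})$. $P_{\mathcal{L}}$ is the partition induced by $s\equiv_{\mathcal{L}}s'\iff\forall\varphi.\,(s\in[\![\varphi]\!]_{\mathcal{S}}\Leftrightarrow s'\in[\![\varphi]\!]_{\mathcal{S}})$; $P$ is strongly preserving for $\mathcal{L}$ iff $P\preceq P_{\mathcal{L}}$. $\mathcal{L}$ is closed under infinite logical conjunction if for every $\Phi\subseteq\mathcal{L}$ (including $\varnothing$) some $\psi$ has $[\![\psi]\!]_{\mathcal{S}}=\bigcap_{\varphi\in\Phi}[\![\varphi]\!]_{\mathcal{S}}$; closed under negation if for every $\varphi$ some $\psi$ has $[\![\psi]\!]_{\mathcal{S}}=\Sigma\setminus[\![\varphi]\!]_{\mathcal{S}}$. *)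

theory Defs
  imports Main "HOL-Library.Disjoint_Sets"
begin

text \<open>Formulae over atoms of type 'p and operators of type 'f.
  The state space Sigma is the universe of the type 'a.\<close>

datatype ('p, 'f) formula = Atom 'p | Op 'f "('p, 'f) formula list"

inductive wff :: "('f \<Rightarrow> nat) \<Rightarrow> ('p, 'f) formula \<Rightarrow> bool" for ar where
  wff_Atom: "wff ar (Atom p)"
| wff_Op: "length xs = ar f \<Longrightarrow> (\<forall>x\<in>set xs. wff ar x) \<Longrightarrow> wff ar (Op f xs)"

primrec sem :: "('p \<Rightarrow> 'a set) \<Rightarrow> ('f \<Rightarrow> 'a set list \<Rightarrow> 'a set)
                 \<Rightarrow> ('p, 'f) formula \<Rightarrow> 'a set" where
  "sem I_at I_op (Atom p) = I_at p"
| "sem I_at I_op (Op f xs) = I_op f (map (sem I_at I_op) xs)"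

definition lang :: "('f \<Rightarrow> nat) \<Rightarrow> ('p, 'f) formula set" where
  "lang ar = {\<phi>. wff ar \<phi>}"

text \<open>Abstract domains are identified with their upper closure operators on
  the powerset of Sigma; ordering A1 below A2 iff mu_A1 \<le> mu_A2 pointwise
  (this is just the function order \<le> on 'a set \<Rightarrow> 'a set).\<close>

definition moore :: "'a set set \<Rightarrow> 'a set set" where
  "moore F = {\<Inter>G | G. G \<subseteq> F}"

definition closure_of_moore :: "'a set set \<Rightarrow> 'a set \<Rightarrow> 'a set" where
  "closure_of_moore M = (\<lambda>S. \<Inter>{X \<in> M. S \<subseteq> X})"

definition AD :: "('f \<Rightarrow> nat) \<Rightarrow> ('p \<Rightarrow> 'a set) \<Rightarrow> ('f \<Rightarrow> 'a set list \<Rightarrow> 'a set)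
                   \<Rightarrow> 'a set \<Rightarrow> 'a set" where
  "AD ar I_at I_op = closure_of_moore (moore (sem I_at I_op ` lang ar))"

definition pad :: "'a set set \<Rightarrow> 'a set \<Rightarrow> 'a set" where
  "pad P = (\<lambda>S. \<Union>{B \<in> P. B \<inter> S \<noteq> {}})"

definition partitioning :: "('a set \<Rightarrow> 'a set) \<Rightarrow> bool" where
  "partitioning mu \<longleftrightarrow> (\<exists>P. partition_on UNIV P \<and> mu = pad P)"

text \<open>par(A): classes of s ~ s' iff alpha{s} = alpha{s'}, equivalently
  (Galois insertion) mu_A{s} = mu_A{s'}.\<close>
definition par :: "('a set \<Rightarrow> 'a set) \<Rightarrow> 'a set set" where
  "par mu = UNIV // {(s, s'). mu {s} = mu {s'}}"

definition refines :: "'a set set \<Rightarrow> 'a set set \<Rightarrow> bool" (infix "\<preceq>\<^sub>P" 50) where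
  "P1 \<preceq>\<^sub>P P2 \<longleftrightarrow> (\<forall>B\<in>P1. \<exists>B'\<in>P2. B \<subseteq> B')"

definition PL :: "('f \<Rightarrow> nat) \<Rightarrow> ('p \<Rightarrow> 'a set) \<Rightarrow> ('f \<Rightarrow> 'a set list \<Rightarrow> 'a set)
                   \<Rightarrow> 'a set set" where
  "PL ar I_at I_op = UNIV // {(s, s'). \<forall>\<phi>\<in>lang ar.
      (s \<in> sem I_at I_op \<phi> \<longleftrightarrow> s' \<in> sem I_at I_op \<phi>)}"

definition strongly_preserving ::
  "'a set set \<Rightarrow> ('f \<Rightarrow> nat) \<Rightarrow> ('p \<Rightarrow> 'a set) \<Rightarrow> ('f \<Rightarrow> 'a set list \<Rightarrow> 'a set) \<Rightarrow> bool" where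
  "strongly_preserving P ar I_at I_op \<longleftrightarrow> P \<preceq>\<^sub>P PL ar I_at I_op"

definition closed_inf_conj ::
  "('f \<Rightarrow> nat) \<Rightarrow> ('p \<Rightarrow> 'a set) \<Rightarrow> ('f \<Rightarrow> 'a set list \<Rightarrow> 'a set) \<Rightarrow> bool" where
  "closed_inf_conj ar I_at I_op \<longleftrightarrow>
     (\<forall>\<Phi> \<subseteq> lang ar. \<exists>\<psi>\<in>lang ar. sem I_at I_op \<psi> = (\<Inter>\<phi>\<in>\<Phi>. sem I_at I_op \<phi>))"

definition closed_neg ::
  "('f \<Rightarrow> nat) \<Rightarrow> ('p \<Rightarrow> 'a set) \<Rightarrow> ('f \<Rightarrow> 'a set list \<Rightarrow> 'a set) \<Rightarrow> bool" where
  "closed_neg ar I_at I_op \<longleftrightarrow>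
     (\<forall>\<phi>\<in>lang ar. \<exists>\<psi>\<in>lang ar. sem I_at I_op \<psi> = - sem I_at I_op \<phi>)"

end

theory Submission
  imports Defs
begin

text \<open>Everything depends only on the family F of extensions of formulae. AD is the Moore
  closure of F, and two states have the same closure of their singletons iff no member of F
  separates them, so par(AD) is the indistinguishability partition P_L. A partition P
  satisfies pad P \<le> AD iff each block lies inside an indistinguishability class. If F is
  closed under intersections, the fixed points of its closure are exactly F; the fixed points
  of pad P are closed under complement, which gives negation. Conversely, a family closed
  under intersections and complements is closed under unions, and its closure maps S to the
  union of the indistinguishability classes meeting S, i.e. to pad P_L S.\<close>

definition indist :: "'a set set \<Rightarrow> ('a \<times> 'a) set" where
  "indist F = {(s, t). \<forall>X\<in>F. s \<in> X \<longleftrightarrow> t \<in> X}"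

lemma equiv_indist: "equiv UNIV (indist F)"
  unfolding equiv_def refl_on_def sym_def trans_def indist_def by auto

lemma closure_of_moore_moore: "closure_of_moore (moore F) = closure_of_moore F"
proof -
  have "F \<subseteq> moore F"
    unfolding moore_def by (auto intro!: exI[of _ "{X}" for X])
  then show ?thesis
    unfolding closure_of_moore_def moore_def by (intro ext equalityI) blast+
qed

lemma mem_closure_of_moore_iff:
  "t \<in> closure_of_moore F S \<longleftrightarrow> (\<forall>X\<in>F. S \<subseteq> X \<longrightarrow> t \<in> X)"
  unfolding closure_of_moore_def by auto

lemma closure_of_moore_superset: "S \<subseteq> closure_of_moore F S"
  unfolding mem_closure_of_moore_iff subset_iff by blast

lemma closure_of_moore_least: "X \<in> F \<Longrightarrow> S \<subseteq> X \<Longrightarrow> closure_of_moore F S \<subseteq> X"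
  unfolding mem_closure_of_moore_iff subset_iff by blast

lemma closure_of_moore_mem:
  assumes "\<forall>G\<subseteq>F. \<Inter>G \<in> F"
  shows "closure_of_moore F S \<in> F"
  using assms unfolding closure_of_moore_def by auto

lemma Union_mem_if_Inter_Compl_closed:
  assumes "\<forall>G\<subseteq>F. \<Inter>G \<in> F" and "\<forall>X\<in>F. - X \<in> F" and "G \<subseteq> F"
  shows "\<Union>G \<in> F"
proof -
  have "\<Inter>(uminus ` G) \<in> F" using assms by blast
  then have "- \<Inter>(uminus ` G) \<in> F" using assms(2) by blast
  then show ?thesis by (simp add: uminus_Inf)
qed

lemma closure_of_moore_singleton_eq_iff:
  "closure_of_moore F {s} = closure_of_moore F {t} \<longleftrightarrow> (s, t) \<in> indist F"
proof
  assume eq: "closure_of_moore F {s} = closure_of_moore F {t}"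
  have "s \<in> closure_of_moore F {t}" "t \<in> closure_of_moore F {s}"
    using closure_of_moore_superset[of "{s}" F] closure_of_moore_superset[of "{t}" F] eq by auto
  then show "(s, t) \<in> indist F"
    unfolding indist_def mem_closure_of_moore_iff by blast
next
  assume "(s, t) \<in> indist F"
  then show "closure_of_moore F {s} = closure_of_moore F {t}"
    unfolding indist_def set_eq_iff mem_closure_of_moore_iff by auto
qed

lemma par_closure_of_moore: "par (closure_of_moore F) = UNIV // indist F"
  unfolding par_def closure_of_moore_singleton_eq_iff by simp

lemma pad_quotient:
  assumes r: "equiv UNIV r"
  shows "pad (UNIV // r) S = r `` S"
proof (intro equalityI subsetI)
  fix t assume "t \<in> pad (UNIV // r) S"
  then obtain x s where "s \<in> S" "(x, s) \<in> r" "(x, t) \<in> r"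
    unfolding pad_def by (auto elim!: quotientE)
  then show "t \<in> r `` S"
    using r by (blast elim: equivE dest: symD transD)
next
  fix t assume "t \<in> r `` S"
  then obtain s where "s \<in> S" "(s, t) \<in> r" by blast
  moreover have "r `` {s} \<in> UNIV // r" "s \<in> r `` {s}"
    using r by (auto intro: quotientI elim: equivE dest: refl_onD)
  ultimately show "t \<in> pad (UNIV // r) S"
    unfolding pad_def by blast
qed

lemma pad_Compl_subset: "pad P X \<subseteq> X \<Longrightarrow> pad P (- X) \<subseteq> - X"
  unfolding pad_def by blast

lemma refines_quotient_indist_iff_pad_le:
  assumes P: "partition_on UNIV P"
  shows "P \<preceq>\<^sub>P UNIV // indist F \<longleftrightarrow> pad P \<le> closure_of_moore F"
proof
  assume refines: "P \<preceq>\<^sub>P UNIV // indist F"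
  show "pad P \<le> closure_of_moore F"
  proof (intro le_funI subsetI)
    fix S t assume "t \<in> pad P S"
    then obtain B s where B: "B \<in> P" "s \<in> B" "s \<in> S" "t \<in> B"
      unfolding pad_def by blast
    then obtain C where "C \<in> UNIV // indist F" "B \<subseteq> C"
      using refines unfolding refines_def by blast
    then obtain x where "B \<subseteq> indist F `` {x}"
      by (auto elim: quotientE)
    then have "(x, s) \<in> indist F" "(x, t) \<in> indist F"
      using B by auto
    then have "(s, t) \<in> indist F"
      unfolding indist_def by auto
    then show "t \<in> closure_of_moore F S"
      using \<open>s \<in> S\<close> unfolding indist_def mem_closure_of_moore_iff by auto
  qed
next
  assume le: "pad P \<le> closure_of_moore F"
  show "P \<preceq>\<^sub>P UNIV // indist F"
    unfolding refines_def
  proof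
    fix B assume "B \<in> P"
    then have "B \<noteq> {}"
      using P unfolding partition_on_def by blast
    then obtain s where "s \<in> B" by blast
    have "B \<subseteq> indist F `` {s}"
    proof
      fix t assume "t \<in> B"
      then have "t \<in> pad P {s}" "s \<in> pad P {t}"
        using \<open>B \<in> P\<close> \<open>s \<in> B\<close> unfolding pad_def by blast+
      then have "t \<in> closure_of_moore F {s}" "s \<in> closure_of_moore F {t}"
        using le by (auto dest: le_funD)
      then show "t \<in> indist F `` {s}"
        unfolding mem_closure_of_moore_iff indist_def by auto
    qed
    moreover have "indist F `` {s} \<in> UNIV // indist F"
      by (rule quotientI) simp
    ultimately show "\<exists>B'\<in>UNIV // indist F. B \<subseteq> B'" by blast
  qed
qed

lemma closure_of_moore_eq_Image_indist:
  assumes inter: "\<forall>G\<subseteq>F. \<Inter>G \<in> F" and compl: "\<forall>X\<in>F. - X \<in> F"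
  shows "closure_of_moore F S = indist F `` S"
proof
  have singleton: "closure_of_moore F {s} = indist F `` {s}" for s
  proof -
    have "(s, t) \<in> indist F" if "\<forall>X\<in>F. s \<in> X \<longrightarrow> t \<in> X" for t
    proof -
      have "t \<in> X \<Longrightarrow> s \<in> X" if "X \<in> F" for X
        using that compl \<open>\<forall>X\<in>F. s \<in> X \<longrightarrow> t \<in> X\<close> by blast
      then show ?thesis
        using that unfolding indist_def by blast
    qed
    then show ?thesis
      unfolding set_eq_iff mem_closure_of_moore_iff by (auto simp: indist_def)
  qed
  let ?U = "\<Union>s\<in>S. closure_of_moore F {s}"
  have "?U \<in> F"
    using Union_mem_if_Inter_Compl_closed[OF inter compl, of "(\<lambda>s. closure_of_moore F {s}) ` S"]
    by (simp add: image_subset_iff closure_of_moore_mem[OF inter])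
  moreover have "S \<subseteq> ?U"
    using closure_of_moore_superset[of "{s}" F for s] by blast
  ultimately have "closure_of_moore F S \<subseteq> ?U"
    by (rule closure_of_moore_least)
  then show "closure_of_moore F S \<subseteq> indist F `` S"
    unfolding singleton by blast
  show "indist F `` S \<subseteq> closure_of_moore F S"
    unfolding subset_iff mem_closure_of_moore_iff by (auto simp: indist_def)
qed

lemma partitioning_closure_of_moore_iff:
  assumes inter: "\<forall>G\<subseteq>F. \<Inter>G \<in> F"
  shows "partitioning (closure_of_moore F) \<longleftrightarrow> (\<forall>X\<in>F. - X \<in> F)"
proof
  assume "partitioning (closure_of_moore F)"
  then obtain P where closure_eq: "closure_of_moore F = pad P"
    unfolding partitioning_def by blast
  show "\<forall>X\<in>F. - X \<in> F"
  proof
    fix X assume "X \<in> F"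
    have "pad P X \<subseteq> X"
      using closure_of_moore_least[OF \<open>X \<in> F\<close> order_refl] unfolding closure_eq .
    then have "closure_of_moore F (- X) \<subseteq> - X"
      unfolding closure_eq by (rule pad_Compl_subset)
    then have "closure_of_moore F (- X) = - X"
      using closure_of_moore_superset[of "- X" F] by (rule equalityI)
    then show "- X \<in> F"
      using closure_of_moore_mem[OF inter, of "- X"] by simp
  qed
next
  assume compl: "\<forall>X\<in>F. - X \<in> F"
  have "closure_of_moore F = pad (UNIV // indist F)"
  proof
    fix S
    show "closure_of_moore F S = pad (UNIV // indist F) S"
      unfolding closure_of_moore_eq_Image_indist[OF inter compl] pad_quotient[OF equiv_indist] ..
  qed
  then show "partitioning (closure_of_moore F)"
    using partition_on_quotient[OF equiv_indist] unfolding partitioning_def by blast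
qed

lemma AD_eq_closure_of_moore:
  "AD ar I_at I_op = closure_of_moore (sem I_at I_op ` lang ar)"
  unfolding AD_def closure_of_moore_moore ..

lemma PL_eq_quotient_indist:
  "PL ar I_at I_op = UNIV // indist (sem I_at I_op ` lang ar)"
  unfolding PL_def indist_def by simp

lemma Inter_closed_if_closed_inf_conj:
  assumes conj: "closed_inf_conj ar I_at I_op" and G: "G \<subseteq> sem I_at I_op ` lang ar"
  shows "\<Inter>G \<in> sem I_at I_op ` lang ar"
proof -
  define \<Phi> where "\<Phi> = {\<phi>\<in>lang ar. sem I_at I_op \<phi> \<in> G}"
  have "\<Phi> \<subseteq> lang ar"
    unfolding \<Phi>_def by blast
  then obtain \<psi> where "\<psi> \<in> lang ar"
    and "sem I_at I_op \<psi> = \<Inter>(sem I_at I_op ` \<Phi>)"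
    using conj[unfolded closed_inf_conj_def, rule_format] by blast
  moreover have "sem I_at I_op ` \<Phi> = G"
    using G unfolding \<Phi>_def by auto
  ultimately show ?thesis
    by (metis image_eqI)
qed

lemma closed_neg_iff_Compl_closed:
  "closed_neg ar I_at I_op \<longleftrightarrow> (\<forall>X\<in>sem I_at I_op ` lang ar. - X \<in> sem I_at I_op ` lang ar)"
  unfolding closed_neg_def by (auto simp: image_iff) (metis)+

theorem proposition5p6:
  fixes ar :: "'f \<Rightarrow> nat"
    and I_at :: "'p \<Rightarrow> 'a set"
    and I_op :: "'f \<Rightarrow> 'a set list \<Rightarrow> 'a set"
  assumes "finite (UNIV :: 'f set)"
    and "\<forall>f. ar f \<ge> 1"
  shows "(PL ar I_at I_op = par (AD ar I_at I_op)
          \<and> pad (PL ar I_at I_op) = pad (par (AD ar I_at I_op)))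
       \<and> (\<forall>P. partition_on UNIV P \<longrightarrow>
            ((strongly_preserving P ar I_at I_op \<longleftrightarrow> P \<preceq>\<^sub>P par (AD ar I_at I_op))
             \<and> (P \<preceq>\<^sub>P par (AD ar I_at I_op) \<longleftrightarrow> pad P \<le> AD ar I_at I_op)))
       \<and> (closed_inf_conj ar I_at I_op \<longrightarrow>
            (partitioning (AD ar I_at I_op) \<longleftrightarrow> closed_neg ar I_at I_op))"
proof -
  let ?F = "sem I_at I_op ` lang ar"
  have "PL ar I_at I_op = par (AD ar I_at I_op)"
    unfolding AD_eq_closure_of_moore PL_eq_quotient_indist par_closure_of_moore ..
  moreover have "P \<preceq>\<^sub>P par (AD ar I_at I_op) \<longleftrightarrow> pad P \<le> AD ar I_at I_op"
    if "partition_on UNIV P" for P :: "'a set set"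
    unfolding AD_eq_closure_of_moore par_closure_of_moore
    using refines_quotient_indist_iff_pad_le[OF that] .
  moreover have "partitioning (AD ar I_at I_op) \<longleftrightarrow> closed_neg ar I_at I_op"
    if "closed_inf_conj ar I_at I_op"
  proof -
    have "\<forall>G\<subseteq>?F. \<Inter>G \<in> ?F"
      using Inter_closed_if_closed_inf_conj[OF that] by blast
    then show ?thesis
      unfolding AD_eq_closure_of_moore closed_neg_iff_Compl_closed
      by (rule partitioning_closure_of_moore_iff)
  qed
  ultimately show ?thesis
    unfolding strongly_preserving_def by simp
qed

end
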